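(* Let $\Omega\subseteq\mathbb{R}^3$ be a domain and let $f=f_0+f_1e_1+f_2e_2\colon\Omega\to\mathbb{R}^3$ be monogenic, i.e. $\overline{\partial} f=0$. Then \[ \overline{\partial}(\overline{x}f+f\overline{x})\overline{\partial}=4\,\overline{\partial} f_0,\qquad \overline{\partial}(|x|^2f)\overline{\partial}=-2\,\overline{f}. \]
   Context: $\mathbb{H}$ denotes the real quaternions with basis $e_0=1,e_1,e_2,e_3$ and $e_1^2=e_2^2=e_3^2=e_1e_2e_3=-1$; $\mathbb{R}^3$ is identified with the reduced quaternions $x=x_0+x_1e_1+x_2e_2$, with conjugate $\overline{x}=x_0-x_1e_1-x_2e_2$ and $|x|^2=x_0^2+x_1^2+x_2^2$; similarly $\overline{f}=f_0-f_1e_1-f_2e_2$. With $\partial_i=\partial/\partial x_i$, for $\mathbb{H}$-valued $g$: $\overline{\partial} g=\partial_0 g+e_1\partial_1 g+e_2\partial_2 g$ (left action), $g\overline{\partial}=\partial_0 g+(\partial_1 g)e_1+(\partial_2 g)e_2$ (right action), and $\overline{\partial} g\overline{\partial}:=\overline{\partial}(g\overline{\partial})$. Products such as $\overline{x}f$ are quaternion products. *)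

theory Defs
  imports "HOL-Analysis.Analysis"
begin

datatype quat = Quat (qre: real) (qi1: real) (qi2: real) (qi3: real)

definition qadd :: "quat \<Rightarrow> quat \<Rightarrow> quat" (infixl "\<oplus>\<^sub>q" 65) where
  "p \<oplus>\<^sub>q q = Quat (qre p + qre q) (qi1 p + qi1 q) (qi2 p + qi2 q) (qi3 p + qi3 q)"

text \<open>Hamilton product with e1^2 = e2^2 = e3^2 = e1 e2 e3 = -1.\<close>
definition qmul :: "quat \<Rightarrow> quat \<Rightarrow> quat" (infixl "\<otimes>\<^sub>q" 70) where
  "p \<otimes>\<^sub>q q = Quat
     (qre p * qre q - qi1 p * qi1 q - qi2 p * qi2 q - qi3 p * qi3 q)
     (qre p * qi1 q + qi1 p * qre q + qi2 p * qi3 q - qi3 p * qi2 q)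
     (qre p * qi2 q - qi1 p * qi3 q + qi2 p * qre q + qi3 p * qi1 q)
     (qre p * qi3 q + qi1 p * qi2 q - qi2 p * qi1 q + qi3 p * qre q)"

definition qscale :: "real \<Rightarrow> quat \<Rightarrow> quat" where
  "qscale r q = Quat (r * qre q) (r * qi1 q) (r * qi2 q) (r * qi3 q)"

definition qzero :: quat where "qzero = Quat 0 0 0 0"
definition qe1 :: quat where "qe1 = Quat 0 1 0 0"
definition qe2 :: quat where "qe2 = Quat 0 0 1 0"

definition qconj :: "quat \<Rightarrow> quat" where
  "qconj q = Quat (qre q) (- qi1 q) (- qi2 q) (- qi3 q)"

text \<open>R^3 = real^3 with coordinates x$1 = x_0, x$2 = x_1, x$3 = x_2,
  identified with reduced quaternions x_0 + x_1 e1 + x_2 e2.\<close>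
definition red :: "real^3 \<Rightarrow> quat" where
  "red x = Quat (x$1) (x$2) (x$3) 0"

definition rquat :: "real \<Rightarrow> quat" where
  "rquat r = Quat r 0 0 0"

text \<open>Partial derivatives of real-valued functions on R^3: index 1,2,3 :: 3
  correspond to the paper's d/dx_0, d/dx_1, d/dx_2.\<close>
definition has_pd :: "(real^3 \<Rightarrow> real) \<Rightarrow> 3 \<Rightarrow> real^3 \<Rightarrow> real \<Rightarrow> bool" where
  "has_pd \<phi> i x d \<longleftrightarrow> ((\<lambda>t. \<phi> (x + t *\<^sub>R axis i 1)) has_real_derivative d) (at 0)"

definition pd :: "3 \<Rightarrow> (real^3 \<Rightarrow> real) \<Rightarrow> real^3 \<Rightarrow> real" where
  "pd i \<phi> x = deriv (\<lambda>t. \<phi> (x + t *\<^sub>R axis i 1)) 0"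

definition C2_on :: "(real^3) set \<Rightarrow> (real^3 \<Rightarrow> real) \<Rightarrow> bool" where
  "C2_on \<Omega> \<phi> \<longleftrightarrow> continuous_on \<Omega> \<phi> \<and>
     (\<forall>i. (\<forall>x\<in>\<Omega>. has_pd \<phi> i x (pd i \<phi> x)) \<and> continuous_on \<Omega> (pd i \<phi>)) \<and>
     (\<forall>i j. (\<forall>x\<in>\<Omega>. has_pd (pd i \<phi>) j x (pd j (pd i \<phi>) x))
            \<and> continuous_on \<Omega> (pd j (pd i \<phi>)))"

definition qpd :: "3 \<Rightarrow> (real^3 \<Rightarrow> quat) \<Rightarrow> real^3 \<Rightarrow> quat" where
  "qpd i g x = Quat (pd i (\<lambda>y. qre (g y)) x) (pd i (\<lambda>y. qi1 (g y)) x)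
                    (pd i (\<lambda>y. qi2 (g y)) x) (pd i (\<lambda>y. qi3 (g y)) x)"

definition dbarL :: "(real^3 \<Rightarrow> quat) \<Rightarrow> real^3 \<Rightarrow> quat" where
  "dbarL g x = qpd 1 g x \<oplus>\<^sub>q qe1 \<otimes>\<^sub>q qpd 2 g x \<oplus>\<^sub>q qe2 \<otimes>\<^sub>q qpd 3 g x"

definition dbarR :: "(real^3 \<Rightarrow> quat) \<Rightarrow> real^3 \<Rightarrow> quat" where
  "dbarR g x = qpd 1 g x \<oplus>\<^sub>q qpd 2 g x \<otimes>\<^sub>q qe1 \<oplus>\<^sub>q qpd 3 g x \<otimes>\<^sub>q qe2"

text \<open>dbar g dbar := dbar (g dbar).\<close>
definition dbarLR :: "(real^3 \<Rightarrow> quat) \<Rightarrow> real^3 \<Rightarrow> quat" where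
  "dbarLR g = dbarL (dbarR g)"

end

theory Submission
  imports Defs
begin

text \<open>
  Write \<open>D\<close> for the Cauchy-Riemann operator and \<open>e\<^sub>0 = 1, e\<^sub>1, e\<^sub>2\<close>, so that \<open>\<partial>\<^sub>i x = e\<^sub>i\<close>.
  Since \<open>f\<close> takes values in \<open>span {1, e\<^sub>1, e\<^sub>2}\<close>, \<open>D f\<close> and \<open>f D\<close> differ only in their
  \<open>e\<^sub>3\<close>-components \<open>\<plusminus>(\<partial>\<^sub>1 f\<^sub>2 - \<partial>\<^sub>2 f\<^sub>1)\<close>, so \<open>f\<close> is also right monogenic. For such
  reduced \<open>q\<close> one has \<open>\<Sum> e\<^sub>i q e\<^sub>i = -q\<^sup>*\<close>, \<open>\<Sum> e\<^sub>i\<^sup>* q e\<^sub>i = \<Sum> e\<^sub>i q e\<^sub>i\<^sup>* = q + 2q\<^sub>0\<close> and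
  \<open>\<Sum> e\<^sub>i\<^sup>* e\<^sub>i = 3\<close> (\<open>q\<^sup>*\<close> the conjugate). The Leibniz rule then gives
  \<open>(|x|\<^sup>2 f) D = 2 f x + |x|\<^sup>2 (f D) = 2 f x\<close> and \<open>D (f x) = (D f) x + \<Sum> e\<^sub>i f e\<^sub>i = -f\<^sup>*\<close>;
  likewise \<open>(x\<^sup>* f + f x\<^sup>*) D = 4 f + 2 f\<^sub>0 + \<Sum>\<^sub>i \<partial>\<^sub>i f x\<^sup>* e\<^sub>i\<close>, and applying \<open>D\<close> to the last sum
  yields \<open>\<Sum>\<^sub>i (D \<partial>\<^sub>i f) x\<^sup>* e\<^sub>i + \<Sum>\<^sub>i (\<partial>\<^sub>i f + 2 \<partial>\<^sub>i f\<^sub>0) e\<^sub>i = 0 + f D + 2 D f\<^sub>0\<close>, because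
  \<open>D \<partial>\<^sub>i f = \<partial>\<^sub>i D f = 0\<close> by the symmetry of second partial derivatives.
\<close>

section \<open>Symmetry of second partial derivatives\<close>

lemma DERIV_along_line_shift:
  fixes \<phi> :: "'a::real_normed_vector \<Rightarrow> real"
  assumes "((\<lambda>t. \<phi> ((y + s *\<^sub>R a) + t *\<^sub>R a)) has_real_derivative d) (at 0)"
  shows "((\<lambda>t. \<phi> (y + t *\<^sub>R a)) has_real_derivative d) (at s)"
proof -
  have "((\<lambda>t. \<phi> (y + (t + s) *\<^sub>R a)) has_real_derivative d) (at 0)"
    using assms by (simp add: algebra_simps)
  then show ?thesis using DERIV_shift[of "\<lambda>t. \<phi> (y + t *\<^sub>R a)" d 0 s] by simp
qed

lemma second_difference_mvt:
  fixes \<phi> P Q :: "'a::real_normed_vector \<Rightarrow> real"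
  assumes h: "h > 0"
    and inU: "\<And>s t. \<bar>s\<bar> \<le> h \<Longrightarrow> \<bar>t\<bar> \<le> h \<Longrightarrow> x + s *\<^sub>R a + t *\<^sub>R b \<in> U"
    and dP: "\<And>y. y \<in> U \<Longrightarrow> ((\<lambda>t. \<phi> (y + t *\<^sub>R a)) has_real_derivative P y) (at 0)"
    and dQ: "\<And>y. y \<in> U \<Longrightarrow> ((\<lambda>t. P (y + t *\<^sub>R b)) has_real_derivative Q y) (at 0)"
  obtains s t where "\<bar>s\<bar> \<le> h" "\<bar>t\<bar> \<le> h"
    "\<phi> (x + h *\<^sub>R a + h *\<^sub>R b) - \<phi> (x + h *\<^sub>R a) - \<phi> (x + h *\<^sub>R b) + \<phi> x
       = h * h * Q (x + s *\<^sub>R a + t *\<^sub>R b)"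
proof -
  define g where "g s = \<phi> ((x + h *\<^sub>R b) + s *\<^sub>R a) - \<phi> (x + s *\<^sub>R a)" for s
  have along_a: "((\<lambda>t. \<phi> (z + t *\<^sub>R a)) has_real_derivative P (z + s *\<^sub>R a)) (at s)"
    if "z + s *\<^sub>R a \<in> U" for z s
    using dP[OF that] by (rule DERIV_along_line_shift)
  have "DERIV g s :> P ((x + h *\<^sub>R b) + s *\<^sub>R a) - P (x + s *\<^sub>R a)" if "0 \<le> s" "s \<le> h" for s
    unfolding g_def
  proof (intro DERIV_diff along_a)
    show "x + h *\<^sub>R b + s *\<^sub>R a \<in> U" "x + s *\<^sub>R a \<in> U"
      using inU[of s h] inU[of s 0] that h by (simp_all add: algebra_simps)
  qed
  from MVT2[OF h this] obtain s where s: "0 < s" "s < h"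
    "g h - g 0 = h * (P ((x + h *\<^sub>R b) + s *\<^sub>R a) - P (x + s *\<^sub>R a))" by auto
  have "DERIV (\<lambda>t. P ((x + s *\<^sub>R a) + t *\<^sub>R b)) t :> Q ((x + s *\<^sub>R a) + t *\<^sub>R b)"
    if "0 \<le> t" "t \<le> h" for t
  proof -
    have "(x + s *\<^sub>R a) + t *\<^sub>R b \<in> U" using inU[of s t] that s by (simp add: algebra_simps)
    from dQ[OF this] show ?thesis by (rule DERIV_along_line_shift)
  qed
  from MVT2[OF h this] obtain t where t: "0 < t" "t < h"
    "P ((x + s *\<^sub>R a) + h *\<^sub>R b) - P (x + s *\<^sub>R a) = h * Q ((x + s *\<^sub>R a) + t *\<^sub>R b)" by auto
  have "\<phi> (x + h *\<^sub>R a + h *\<^sub>R b) - \<phi> (x + h *\<^sub>R a) - \<phi> (x + h *\<^sub>R b) + \<phi> x = g h - g 0"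
    unfolding g_def by (simp add: algebra_simps)
  also have "\<dots> = h * h * Q (x + s *\<^sub>R a + t *\<^sub>R b)"
    using s(3) t(3) by (simp add: algebra_simps)
  finally show ?thesis using that[of s t] s t by simp
qed

lemma pd_commute:
  assumes "open \<Omega>" "x \<in> \<Omega>" "C2_on \<Omega> \<phi>"
  shows "pd j (pd i \<phi>) x = pd i (pd j \<phi>) x"
proof -
  let ?A = "pd j (pd i \<phi>)" and ?B = "pd i (pd j \<phi>)"
  have "\<bar>?A x - ?B x\<bar> \<le> e" if "e > 0" for e
  proof -
    \<comment> \<open>both mixed partials are values of one second difference quotient at points near \<open>x\<close>\<close>
    have "continuous_on \<Omega> ?A" "continuous_on \<Omega> ?B"
      using assms(3) unfolding C2_on_def by auto
    then obtain dA dB where "dA > 0" "dB > 0"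
      and dA: "\<And>y. y \<in> \<Omega> \<Longrightarrow> dist y x < dA \<Longrightarrow> dist (?A y) (?A x) < e / 2"
      and dB: "\<And>y. y \<in> \<Omega> \<Longrightarrow> dist y x < dB \<Longrightarrow> dist (?B y) (?B x) < e / 2"
      using assms(2) \<open>e > 0\<close> unfolding continuous_on_iff by (metis half_gt_zero)
    obtain r where "r > 0" "ball x r \<subseteq> \<Omega>" using assms(1,2) open_contains_ball by blast
    define d where "d = min r (min dA dB)"
    define h where "h = d / 3"
    have "d > 0" "h > 0" using \<open>r > 0\<close> \<open>dA > 0\<close> \<open>dB > 0\<close> by (simp_all add: d_def h_def)
    have U: "ball x d \<subseteq> \<Omega>" using \<open>ball x r \<subseteq> \<Omega>\<close> by (auto simp: d_def)
    have inU: "x + s *\<^sub>R axis k 1 + t *\<^sub>R axis l 1 \<in> ball x d"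
      if "\<bar>s\<bar> \<le> h" "\<bar>t\<bar> \<le> h" for s t k l
    proof -
      have "norm (s *\<^sub>R axis k (1::real) + t *\<^sub>R axis l 1) \<le> \<bar>s\<bar> + \<bar>t\<bar>"
        using norm_triangle_ineq[of "s *\<^sub>R axis k (1::real)" "t *\<^sub>R axis l 1"] by simp
      moreover have "dist x (x + w) = norm w" for w :: "real^3"
        by (metis dist_norm dist_commute add_diff_cancel_left')
      ultimately show ?thesis using that \<open>d > 0\<close> by (simp add: h_def add.assoc)
    qed
    have D1: "\<And>y k. y \<in> ball x d \<Longrightarrow> ((\<lambda>t. \<phi> (y + t *\<^sub>R axis k 1)) has_real_derivative pd k \<phi> y) (at 0)"
      and D2: "\<And>y k l. y \<in> ball x d \<Longrightarrow>
        ((\<lambda>t. pd k \<phi> (y + t *\<^sub>R axis l 1)) has_real_derivative pd l (pd k \<phi>) y) (at 0)"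
      using assms(3) U unfolding C2_on_def has_pd_def by blast+
    obtain s t where st: "\<bar>s\<bar> \<le> h" "\<bar>t\<bar> \<le> h"
      "\<phi> (x + h *\<^sub>R axis i 1 + h *\<^sub>R axis j 1) - \<phi> (x + h *\<^sub>R axis i 1) - \<phi> (x + h *\<^sub>R axis j 1) + \<phi> x
         = h * h * ?A (x + s *\<^sub>R axis i 1 + t *\<^sub>R axis j 1)"
      using second_difference_mvt[OF \<open>h > 0\<close> inU D1 D2] by blast
    obtain s' t' where st': "\<bar>s'\<bar> \<le> h" "\<bar>t'\<bar> \<le> h"
      "\<phi> (x + h *\<^sub>R axis j 1 + h *\<^sub>R axis i 1) - \<phi> (x + h *\<^sub>R axis j 1) - \<phi> (x + h *\<^sub>R axis i 1) + \<phi> x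
         = h * h * ?B (x + s' *\<^sub>R axis j 1 + t' *\<^sub>R axis i 1)"
      using second_difference_mvt[OF \<open>h > 0\<close> inU D1 D2] by blast
    have "?A (x + s *\<^sub>R axis i 1 + t *\<^sub>R axis j 1) = ?B (x + s' *\<^sub>R axis j 1 + t' *\<^sub>R axis i 1)"
      using st(3) st'(3) \<open>h > 0\<close> by (simp add: algebra_simps)
    moreover have "dist (?A (x + s *\<^sub>R axis i 1 + t *\<^sub>R axis j 1)) (?A x) < e / 2"
      using inU[OF st(1,2), of i j] U by (intro dA) (auto simp: d_def dist_commute)
    moreover have "dist (?B (x + s' *\<^sub>R axis j 1 + t' *\<^sub>R axis i 1)) (?B x) < e / 2"
      using inU[OF st'(1,2), of j i] U by (intro dB) (auto simp: d_def dist_commute)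
    ultimately show ?thesis unfolding dist_real_def by linarith
  qed
  then show ?thesis using dense_eq0_I[of "?A x - ?B x"] by simp
qed

definition has_partials_on :: "(real^3) set \<Rightarrow> (real^3 \<Rightarrow> real) \<Rightarrow> bool" where
  "has_partials_on \<Omega> \<phi> \<longleftrightarrow> (\<forall>i. \<forall>y\<in>\<Omega>. has_pd \<phi> i y (pd i \<phi> y))"

lemma pd_eqI: "has_pd \<phi> i x d \<Longrightarrow> pd i \<phi> x = d"
  unfolding has_pd_def pd_def by (rule DERIV_imp_deriv)

lemma has_pd_add: "has_pd \<phi> i x a \<Longrightarrow> has_pd \<psi> i x b \<Longrightarrow> has_pd (\<lambda>y. \<phi> y + \<psi> y) i x (a + b)"
  unfolding has_pd_def by (rule DERIV_add)

lemma has_pd_diff: "has_pd \<phi> i x a \<Longrightarrow> has_pd \<psi> i x b \<Longrightarrow> has_pd (\<lambda>y. \<phi> y - \<psi> y) i x (a - b)"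
  unfolding has_pd_def by (rule DERIV_diff)

lemma has_pd_minus: "has_pd \<phi> i x a \<Longrightarrow> has_pd (\<lambda>y. - \<phi> y) i x (- a)"
  unfolding has_pd_def by (rule DERIV_minus)

lemma has_pd_mult:
  "has_pd \<phi> i x a \<Longrightarrow> has_pd \<psi> i x b \<Longrightarrow> has_pd (\<lambda>y. \<phi> y * \<psi> y) i x (a * \<psi> x + \<phi> x * b)"
  unfolding has_pd_def by (drule (1) DERIV_mult) (simp add: mult.commute)

lemma has_pd_const: "has_pd (\<lambda>y. c) i x 0"
  unfolding has_pd_def by simp

lemma has_pd_coord: "has_pd (\<lambda>y. y $ k) i x (if k = i then 1 else 0)"
  unfolding has_pd_def by (auto simp: axis_def intro!: derivative_eq_intros)

lemma has_pd_norm_sq: "has_pd (\<lambda>y. (norm y)\<^sup>2) i x (2 * x $ i)"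
proof -
  have "(norm (x + t *\<^sub>R axis i 1))\<^sup>2 = (norm x)\<^sup>2 + 2 * x $ i * t + t\<^sup>2" for t
    by (simp add: power2_norm_eq_inner inner_add_left inner_add_right inner_axis inner_axis'
        inner_axis_axis) (simp add: power2_eq_square algebra_simps)
  then show ?thesis
    unfolding has_pd_def by (auto intro!: derivative_eq_intros)
qed

lemma pd_const [simp]: "pd i (\<lambda>y. c) x = 0"
  by (rule pd_eqI has_pd_const)+

lemma pd_coord [simp]: "pd i (\<lambda>y. y $ k) x = (if k = i then 1 else 0)"
  by (rule pd_eqI has_pd_coord)+

lemma pd_norm_sq [simp]: "pd i (\<lambda>y. (norm y)\<^sup>2) x = 2 * x $ i"
  by (rule pd_eqI has_pd_norm_sq)+

lemma has_partials_onD: "has_partials_on \<Omega> \<phi> \<Longrightarrow> x \<in> \<Omega> \<Longrightarrow> has_pd \<phi> i x (pd i \<phi> x)"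
  unfolding has_partials_on_def by blast

lemma has_partials_onI: "(\<And>i x. x \<in> \<Omega> \<Longrightarrow> \<exists>d. has_pd \<phi> i x d) \<Longrightarrow> has_partials_on \<Omega> \<phi>"
  unfolding has_partials_on_def by (metis pd_eqI)

lemma has_partials_on_add [simp]:
  "has_partials_on \<Omega> \<phi> \<Longrightarrow> has_partials_on \<Omega> \<psi> \<Longrightarrow> has_partials_on \<Omega> (\<lambda>y. \<phi> y + \<psi> y)"
  by (blast intro: has_partials_onI has_pd_add has_partials_onD)

lemma has_partials_on_diff [simp]:
  "has_partials_on \<Omega> \<phi> \<Longrightarrow> has_partials_on \<Omega> \<psi> \<Longrightarrow> has_partials_on \<Omega> (\<lambda>y. \<phi> y - \<psi> y)"
  by (blast intro: has_partials_onI has_pd_diff has_partials_onD)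

lemma has_partials_on_minus [simp]:
  "has_partials_on \<Omega> \<phi> \<Longrightarrow> has_partials_on \<Omega> (\<lambda>y. - \<phi> y)"
  by (blast intro: has_partials_onI has_pd_minus has_partials_onD)

lemma has_partials_on_mult [simp]:
  "has_partials_on \<Omega> \<phi> \<Longrightarrow> has_partials_on \<Omega> \<psi> \<Longrightarrow> has_partials_on \<Omega> (\<lambda>y. \<phi> y * \<psi> y)"
  by (blast intro: has_partials_onI has_pd_mult has_partials_onD)

lemma has_partials_on_const [simp]: "has_partials_on \<Omega> (\<lambda>y. c)"
  by (blast intro: has_partials_onI has_pd_const)

lemma has_partials_on_coord [simp]: "has_partials_on \<Omega> (\<lambda>y. y $ k)"
  by (blast intro: has_partials_onI has_pd_coord)

lemma has_partials_on_norm_sq [simp]: "has_partials_on \<Omega> (\<lambda>y. (norm y)\<^sup>2)"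
  by (blast intro: has_partials_onI has_pd_norm_sq)

lemma C2_on_has_partials_on:
  assumes "C2_on \<Omega> \<phi>"
  shows "has_partials_on \<Omega> \<phi>" "has_partials_on \<Omega> (pd i \<phi>)"
  using assms unfolding C2_on_def has_partials_on_def by blast+

lemma C2_on_const: "C2_on \<Omega> (\<lambda>y. c)"
proof -
  have "pd i (\<lambda>y. c) = (\<lambda>y. 0)" for i by (simp add: fun_eq_iff)
  then show ?thesis by (simp add: C2_on_def has_pd_const)
qed

lemma eventually_eq_along_line:
  fixes \<Omega> :: "'a::real_normed_vector set"
  assumes "open \<Omega>" "x \<in> \<Omega>" "\<And>y. y \<in> \<Omega> \<Longrightarrow> \<phi> y = \<psi> y"
  shows "eventually (\<lambda>t. \<phi> (x + t *\<^sub>R a) = \<psi> (x + t *\<^sub>R a)) (nhds 0)"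
proof -
  have "open ((\<lambda>t::real. x + t *\<^sub>R a) -` \<Omega>)"
    by (intro continuous_open_vimage assms(1) continuous_intros)
  moreover have "0 \<in> (\<lambda>t::real. x + t *\<^sub>R a) -` \<Omega>" using assms(2) by simp
  ultimately show ?thesis
    unfolding eventually_nhds by (intro exI[of _ "(\<lambda>t. x + t *\<^sub>R a) -` \<Omega>"]) (simp add: assms(3))
qed

section \<open>Quaternions as a real algebra\<close>

lemma quat_eq_iff: "p = q \<longleftrightarrow> qre p = qre q \<and> qi1 p = qi1 q \<and> qi2 p = qi2 q \<and> qi3 p = qi3 q"
  by (auto intro: quat.expand)

instantiation quat :: real_algebra_1
begin

definition "0 = qzero"
definition "1 = rquat 1"
definition "p + q = p \<oplus>\<^sub>q q"
definition "- q = qscale (-1) q"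
definition "p - q = p + - (q::quat)"
definition "p * q = p \<otimes>\<^sub>q q"
definition "scaleR = qscale"

lemma quat_components [simp]:
  "qre 0 = 0" "qi1 0 = 0" "qi2 0 = 0" "qi3 0 = 0"
  "qre 1 = 1" "qi1 1 = 0" "qi2 1 = 0" "qi3 1 = 0"
  "qre (p + q) = qre p + qre q" "qi1 (p + q) = qi1 p + qi1 q"
  "qi2 (p + q) = qi2 p + qi2 q" "qi3 (p + q) = qi3 p + qi3 q"
  "qre (- q) = - qre q" "qi1 (- q) = - qi1 q" "qi2 (- q) = - qi2 q" "qi3 (- q) = - qi3 q"
  "qre (p - q) = qre p - qre q" "qi1 (p - q) = qi1 p - qi1 q"
  "qi2 (p - q) = qi2 p - qi2 q" "qi3 (p - q) = qi3 p - qi3 q"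
  "qre (r *\<^sub>R q) = r * qre q" "qi1 (r *\<^sub>R q) = r * qi1 q"
  "qi2 (r *\<^sub>R q) = r * qi2 q" "qi3 (r *\<^sub>R q) = r * qi3 q"
  "qre (p * q) = qre p * qre q - qi1 p * qi1 q - qi2 p * qi2 q - qi3 p * qi3 q"
  "qi1 (p * q) = qre p * qi1 q + qi1 p * qre q + qi2 p * qi3 q - qi3 p * qi2 q"
  "qi2 (p * q) = qre p * qi2 q - qi1 p * qi3 q + qi2 p * qre q + qi3 p * qi1 q"
  "qi3 (p * q) = qre p * qi3 q + qi1 p * qi2 q - qi2 p * qi1 q + qi3 p * qre q"
  by (simp_all add: zero_quat_def one_quat_def plus_quat_def uminus_quat_def minus_quat_def
      times_quat_def scaleR_quat_def qzero_def rquat_def qadd_def qscale_def qmul_def)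

instance
  by standard (simp_all add: quat_eq_iff algebra_simps)

end

lemma quat_operations:
  "qzero = 0" "p \<oplus>\<^sub>q q = p + q" "p \<otimes>\<^sub>q q = p * q" "qscale r q = r *\<^sub>R q" "rquat r = of_real r"
  by (simp_all add: quat_eq_iff qzero_def qadd_def qmul_def qscale_def rquat_def of_real_def)

lemma of_real_components [simp]:
  "qre (of_real r) = r" "qi1 (of_real r) = 0" "qi2 (of_real r) = 0" "qi3 (of_real r) = 0"
  by (simp_all add: of_real_def)

lemma numeral_components [simp]:
  "qre (numeral n) = numeral n" "qi1 (numeral n) = 0" "qi2 (numeral n) = 0" "qi3 (numeral n) = 0"
  by (simp_all only: of_real_numeral[where 'a=quat, symmetric] of_real_components)

lemma of_real_mult_commute: "of_real r * q = q * (of_real r :: quat)"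
  by (simp add: quat_eq_iff)

lemma qconj_components [simp]:
  "qre (qconj q) = qre q" "qi1 (qconj q) = - qi1 q" "qi2 (qconj q) = - qi2 q" "qi3 (qconj q) = - qi3 q"
  by (simp_all add: qconj_def)

lemma red_components [simp]:
  "qre (red y) = y $ 1" "qi1 (red y) = y $ 2" "qi2 (red y) = y $ 3" "qi3 (red y) = 0"
  by (simp_all add: red_def)

definition qbasis :: "3 \<Rightarrow> quat" where
  "qbasis i = red (axis i 1)"

lemma qbasis_simps: "qbasis 1 = 1" "qbasis 2 = qe1" "qbasis 3 = qe2"
  by (simp_all add: quat_eq_iff qbasis_def qe1_def qe2_def axis_def)

lemma red_eq_sum: "red y = (\<Sum>i\<in>UNIV. y $ i *\<^sub>R qbasis i)"
  by (simp add: quat_eq_iff sum_3 qbasis_simps qe1_def qe2_def)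

lemma sum_qbasis_sandwich:
  "qi3 q = 0 \<Longrightarrow> (\<Sum>i\<in>UNIV. qbasis i * q * qbasis i) = - qconj q"
  by (simp add: quat_eq_iff sum_3 qbasis_simps qe1_def qe2_def)

lemma sum_qconj_qbasis_sandwich:
  "qi3 q = 0 \<Longrightarrow> (\<Sum>i\<in>UNIV. qconj (qbasis i) * q * qbasis i) = q + of_real (2 * qre q)"
  by (simp add: quat_eq_iff sum_3 qbasis_simps qe1_def qe2_def)

lemma sum_qbasis_sandwich_qconj:
  "qi3 q = 0 \<Longrightarrow> (\<Sum>i\<in>UNIV. qbasis i * q * qconj (qbasis i)) = q + of_real (2 * qre q)"
  by (simp add: quat_eq_iff sum_3 qbasis_simps qe1_def qe2_def)

lemma sum_qconj_qbasis_mult_qbasis: "(\<Sum>i\<in>UNIV. qconj (qbasis i) * qbasis i) = 3"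
  by (simp add: quat_eq_iff sum_3 qbasis_simps qe1_def qe2_def)

section \<open>Quaternion-valued partial derivatives and the Cauchy-Riemann operators\<close>

definition qhas_partials_on :: "(real^3) set \<Rightarrow> (real^3 \<Rightarrow> quat) \<Rightarrow> bool" where
  "qhas_partials_on \<Omega> g \<longleftrightarrow>
     has_partials_on \<Omega> (\<lambda>y. qre (g y)) \<and> has_partials_on \<Omega> (\<lambda>y. qi1 (g y)) \<and>
     has_partials_on \<Omega> (\<lambda>y. qi2 (g y)) \<and> has_partials_on \<Omega> (\<lambda>y. qi3 (g y))"

lemma qpd_components [simp]:
  "qre (qpd i g x) = pd i (\<lambda>y. qre (g y)) x" "qi1 (qpd i g x) = pd i (\<lambda>y. qi1 (g y)) x"
  "qi2 (qpd i g x) = pd i (\<lambda>y. qi2 (g y)) x" "qi3 (qpd i g x) = pd i (\<lambda>y. qi3 (g y)) x"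
  by (simp_all add: qpd_def)

lemma qhas_partials_on_add [simp]:
  "qhas_partials_on \<Omega> g \<Longrightarrow> qhas_partials_on \<Omega> h \<Longrightarrow> qhas_partials_on \<Omega> (\<lambda>y. g y + h y)"
  by (simp add: qhas_partials_on_def)

lemma qhas_partials_on_mult [simp]:
  "qhas_partials_on \<Omega> g \<Longrightarrow> qhas_partials_on \<Omega> h \<Longrightarrow> qhas_partials_on \<Omega> (\<lambda>y. g y * h y)"
  by (simp add: qhas_partials_on_def)

lemma qhas_partials_on_sum [simp]:
  "finite I \<Longrightarrow> (\<And>k. k \<in> I \<Longrightarrow> qhas_partials_on \<Omega> (g k)) \<Longrightarrow>
     qhas_partials_on \<Omega> (\<lambda>y. \<Sum>k\<in>I. g k y)"
  by (induction I rule: finite_induct) (simp_all add: qhas_partials_on_def)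

lemma qhas_partials_on_scaleR [simp]:
  "has_partials_on \<Omega> \<phi> \<Longrightarrow> qhas_partials_on \<Omega> g \<Longrightarrow> qhas_partials_on \<Omega> (\<lambda>y. \<phi> y *\<^sub>R g y)"
  by (simp add: qhas_partials_on_def)

lemma qhas_partials_on_of_real [simp]:
  "has_partials_on \<Omega> \<phi> \<Longrightarrow> qhas_partials_on \<Omega> (\<lambda>y. of_real (\<phi> y))"
  by (simp add: qhas_partials_on_def)

lemma qhas_partials_on_const [simp]: "qhas_partials_on \<Omega> (\<lambda>y. c)"
  by (simp add: qhas_partials_on_def)

lemma qhas_partials_on_red [simp]: "qhas_partials_on \<Omega> red"
  by (simp add: qhas_partials_on_def)

lemma qhas_partials_on_qconj [simp]:
  "qhas_partials_on \<Omega> g \<Longrightarrow> qhas_partials_on \<Omega> (\<lambda>y. qconj (g y))"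
  by (simp add: qhas_partials_on_def)

definition qC2_on :: "(real^3) set \<Rightarrow> (real^3 \<Rightarrow> quat) \<Rightarrow> bool" where
  "qC2_on \<Omega> g \<longleftrightarrow>
     C2_on \<Omega> (\<lambda>y. qre (g y)) \<and> C2_on \<Omega> (\<lambda>y. qi1 (g y)) \<and>
     C2_on \<Omega> (\<lambda>y. qi2 (g y)) \<and> C2_on \<Omega> (\<lambda>y. qi3 (g y))"

lemma qC2_on_has_partials_on:
  assumes "qC2_on \<Omega> g"
  shows "qhas_partials_on \<Omega> g" "qhas_partials_on \<Omega> (qpd i g)"
  using assms unfolding qC2_on_def qhas_partials_on_def
  by (simp_all add: C2_on_has_partials_on)

lemma qpd_const [simp]: "qpd i (\<lambda>y. c) x = 0"
  by (simp add: quat_eq_iff)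

lemma qpd_red [simp]: "qpd i red x = qbasis i"
  by (simp add: quat_eq_iff qbasis_def axis_def)

lemma dbarL_eq_sum: "dbarL g x = (\<Sum>i\<in>UNIV. qbasis i * qpd i g x)"
  by (simp add: dbarL_def sum_3 qbasis_simps quat_operations)

lemma dbarR_eq_sum: "dbarR g x = (\<Sum>i\<in>UNIV. qpd i g x * qbasis i)"
  by (simp add: dbarR_def sum_3 qbasis_simps quat_operations)

lemma dbarR_eq_0_if_dbarL_eq_0:
  assumes "\<And>y. qi3 (F y) = 0" "dbarL F x = 0"
  shows "dbarR F x = 0"
  using assms by (simp add: dbarL_def dbarR_def quat_operations quat_eq_iff qe1_def qe2_def)

context
  fixes \<Omega> :: "(real^3) set"
begin

lemma pd_add [simp]:
  "has_partials_on \<Omega> \<phi> \<Longrightarrow> has_partials_on \<Omega> \<psi> \<Longrightarrow> x \<in> \<Omega> \<Longrightarrow>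
     pd i (\<lambda>y. \<phi> y + \<psi> y) x = pd i \<phi> x + pd i \<psi> x"
  by (intro pd_eqI has_pd_add has_partials_onD)

lemma pd_diff [simp]:
  "has_partials_on \<Omega> \<phi> \<Longrightarrow> has_partials_on \<Omega> \<psi> \<Longrightarrow> x \<in> \<Omega> \<Longrightarrow>
     pd i (\<lambda>y. \<phi> y - \<psi> y) x = pd i \<phi> x - pd i \<psi> x"
  by (intro pd_eqI has_pd_diff has_partials_onD)

lemma pd_minus [simp]:
  "has_partials_on \<Omega> \<phi> \<Longrightarrow> x \<in> \<Omega> \<Longrightarrow> pd i (\<lambda>y. - \<phi> y) x = - pd i \<phi> x"
  by (intro pd_eqI has_pd_minus has_partials_onD)

lemma pd_mult [simp]:
  "has_partials_on \<Omega> \<phi> \<Longrightarrow> has_partials_on \<Omega> \<psi> \<Longrightarrow> x \<in> \<Omega> \<Longrightarrow>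
     pd i (\<lambda>y. \<phi> y * \<psi> y) x = pd i \<phi> x * \<psi> x + \<phi> x * pd i \<psi> x"
  by (intro pd_eqI has_pd_mult has_partials_onD)

lemma qpd_add [simp]:
  "qhas_partials_on \<Omega> g \<Longrightarrow> qhas_partials_on \<Omega> h \<Longrightarrow> x \<in> \<Omega> \<Longrightarrow>
     qpd i (\<lambda>y. g y + h y) x = qpd i g x + qpd i h x"
  unfolding qhas_partials_on_def by (elim conjE) (simp add: quat_eq_iff)

lemma qpd_mult [simp]:
  "qhas_partials_on \<Omega> g \<Longrightarrow> qhas_partials_on \<Omega> h \<Longrightarrow> x \<in> \<Omega> \<Longrightarrow>
     qpd i (\<lambda>y. g y * h y) x = qpd i g x * h x + g x * qpd i h x"
  unfolding qhas_partials_on_def by (elim conjE) (simp add: quat_eq_iff algebra_simps)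

lemma qpd_sum [simp]:
  "finite I \<Longrightarrow> (\<And>k. k \<in> I \<Longrightarrow> qhas_partials_on \<Omega> (g k)) \<Longrightarrow> x \<in> \<Omega> \<Longrightarrow>
     qpd i (\<lambda>y. \<Sum>k\<in>I. g k y) x = (\<Sum>k\<in>I. qpd i (g k) x)"
  by (induction I rule: finite_induct) (simp_all add: quat_eq_iff)

lemma qpd_of_real [simp]:
  "has_partials_on \<Omega> \<phi> \<Longrightarrow> x \<in> \<Omega> \<Longrightarrow> qpd i (\<lambda>y. of_real (\<phi> y)) x = of_real (pd i \<phi> x)"
  by (simp add: quat_eq_iff)

lemma qpd_scaleR [simp]:
  "has_partials_on \<Omega> \<phi> \<Longrightarrow> qhas_partials_on \<Omega> g \<Longrightarrow> x \<in> \<Omega> \<Longrightarrow>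
     qpd i (\<lambda>y. \<phi> y *\<^sub>R g y) x = pd i \<phi> x *\<^sub>R g x + \<phi> x *\<^sub>R qpd i g x"
  unfolding qhas_partials_on_def by (elim conjE) (simp add: quat_eq_iff)

lemma qpd_qconj [simp]:
  "qhas_partials_on \<Omega> g \<Longrightarrow> x \<in> \<Omega> \<Longrightarrow> qpd i (\<lambda>y. qconj (g y)) x = qconj (qpd i g x)"
  unfolding qhas_partials_on_def by (elim conjE) (simp add: quat_eq_iff)

lemma dbarL_add:
  "qhas_partials_on \<Omega> g \<Longrightarrow> qhas_partials_on \<Omega> h \<Longrightarrow> x \<in> \<Omega> \<Longrightarrow>
     dbarL (\<lambda>y. g y + h y) x = dbarL g x + dbarL h x"
  by (simp add: dbarL_eq_sum sum.distrib distrib_left)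

lemma dbarR_add:
  "qhas_partials_on \<Omega> g \<Longrightarrow> qhas_partials_on \<Omega> h \<Longrightarrow> x \<in> \<Omega> \<Longrightarrow>
     dbarR (\<lambda>y. g y + h y) x = dbarR g x + dbarR h x"
  by (simp add: dbarR_eq_sum sum.distrib distrib_right)

lemma dbarL_sum:
  "finite I \<Longrightarrow> (\<And>k. k \<in> I \<Longrightarrow> qhas_partials_on \<Omega> (g k)) \<Longrightarrow> x \<in> \<Omega> \<Longrightarrow>
     dbarL (\<lambda>y. \<Sum>k\<in>I. g k y) x = (\<Sum>k\<in>I. dbarL (g k) x)"
  by (simp add: dbarL_eq_sum sum_distrib_left sum.swap[of _ I])

lemma dbarL_mult:
  "qhas_partials_on \<Omega> g \<Longrightarrow> qhas_partials_on \<Omega> h \<Longrightarrow> x \<in> \<Omega> \<Longrightarrow>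
     dbarL (\<lambda>y. g y * h y) x = dbarL g x * h x + (\<Sum>i\<in>UNIV. qbasis i * g x * qpd i h x)"
  by (simp add: dbarL_eq_sum sum.distrib sum_distrib_right distrib_left mult.assoc)

lemma dbarR_mult:
  "qhas_partials_on \<Omega> g \<Longrightarrow> qhas_partials_on \<Omega> h \<Longrightarrow> x \<in> \<Omega> \<Longrightarrow>
     dbarR (\<lambda>y. g y * h y) x = (\<Sum>i\<in>UNIV. qpd i g x * h x * qbasis i) + g x * dbarR h x"
  by (simp add: dbarR_eq_sum sum.distrib sum_distrib_left distrib_right mult.assoc)

lemma dbarL_scaleR:
  "has_partials_on \<Omega> \<phi> \<Longrightarrow> qhas_partials_on \<Omega> g \<Longrightarrow> x \<in> \<Omega> \<Longrightarrow>
     dbarL (\<lambda>y. \<phi> y *\<^sub>R g y) x = (\<Sum>i\<in>UNIV. pd i \<phi> x *\<^sub>R (qbasis i * g x)) + \<phi> x *\<^sub>R dbarL g x"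
  by (simp add: dbarL_eq_sum scaleR_sum_right sum.distrib distrib_left)

lemma dbarR_scaleR:
  "has_partials_on \<Omega> \<phi> \<Longrightarrow> qhas_partials_on \<Omega> g \<Longrightarrow> x \<in> \<Omega> \<Longrightarrow>
     dbarR (\<lambda>y. \<phi> y *\<^sub>R g y) x = (\<Sum>i\<in>UNIV. pd i \<phi> x *\<^sub>R (g x * qbasis i)) + \<phi> x *\<^sub>R dbarR g x"
  by (simp add: dbarR_eq_sum scaleR_sum_right sum.distrib distrib_right)

lemma dbarL_of_real:
  "has_partials_on \<Omega> \<phi> \<Longrightarrow> x \<in> \<Omega> \<Longrightarrow>
     dbarL (\<lambda>y. of_real (\<phi> y)) x = (\<Sum>i\<in>UNIV. of_real (pd i \<phi> x) * qbasis i)"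
  by (simp add: dbarL_eq_sum of_real_mult_commute)

context
  assumes open_dom: "open \<Omega>"
begin

lemma pd_cong:
  "x \<in> \<Omega> \<Longrightarrow> (\<And>y. y \<in> \<Omega> \<Longrightarrow> \<phi> y = \<psi> y) \<Longrightarrow> pd i \<phi> x = pd i \<psi> x"
  unfolding pd_def by (rule deriv_cong_ev) (simp_all add: eventually_eq_along_line[OF open_dom])

lemma qpd_cong:
  "x \<in> \<Omega> \<Longrightarrow> (\<And>y. y \<in> \<Omega> \<Longrightarrow> g y = h y) \<Longrightarrow> qpd i g x = qpd i h x"
  unfolding qpd_def by (intro arg_cong4[where f=Quat] pd_cong) auto

lemma qpd_commute: "qC2_on \<Omega> g \<Longrightarrow> x \<in> \<Omega> \<Longrightarrow> qpd j (qpd i g) x = qpd i (qpd j g) x"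
  unfolding qC2_on_def by (simp add: quat_eq_iff pd_commute[OF open_dom])

lemma dbarL_cong:
  assumes "x \<in> \<Omega>" "\<And>y. y \<in> \<Omega> \<Longrightarrow> g y = h y"
  shows "dbarL g x = dbarL h x"
  using qpd_cong[OF assms] by (simp add: dbarL_eq_sum)

section \<open>Monogenic functions\<close>

lemma dbarR_norm_sq_scaleR_monogenic:
  assumes "\<And>y. qi3 (F y) = 0" "qhas_partials_on \<Omega> F" "x \<in> \<Omega>" "dbarL F x = 0"
  shows "dbarR (\<lambda>y. (norm y)\<^sup>2 *\<^sub>R F y) x = 2 *\<^sub>R (F x * red x)"
proof -
  have "dbarR (\<lambda>y. (norm y)\<^sup>2 *\<^sub>R F y) x = (\<Sum>i\<in>UNIV. (2 * x $ i) *\<^sub>R (F x * qbasis i))"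
    using assms by (simp add: dbarR_scaleR dbarR_eq_0_if_dbarL_eq_0)
  also have "\<dots> = 2 *\<^sub>R (F x * red x)"
    by (simp add: red_eq_sum sum_distrib_left scaleR_sum_right)
  finally show ?thesis .
qed

lemma dbarL_mult_red_monogenic:
  assumes "\<And>y. qi3 (F y) = 0" "qhas_partials_on \<Omega> F" "x \<in> \<Omega>" "dbarL F x = 0"
  shows "dbarL (\<lambda>y. F y * red y) x = - qconj (F x)"
  using assms by (simp add: dbarL_mult sum_qbasis_sandwich)

lemma dbarLR_norm_sq_scaleR_monogenic:
  assumes "\<And>y. qi3 (F y) = 0" "qhas_partials_on \<Omega> F" "x \<in> \<Omega>"
    and "\<And>y. y \<in> \<Omega> \<Longrightarrow> dbarL F y = 0"
  shows "dbarLR (\<lambda>y. (norm y)\<^sup>2 *\<^sub>R F y) x = - 2 *\<^sub>R qconj (F x)"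
proof -
  have "dbarLR (\<lambda>y. (norm y)\<^sup>2 *\<^sub>R F y) x = dbarL (\<lambda>y. 2 *\<^sub>R (F y * red y)) x"
    unfolding dbarLR_def using assms by (intro dbarL_cong) (simp_all add: dbarR_norm_sq_scaleR_monogenic)
  also have "\<dots> = 2 *\<^sub>R dbarL (\<lambda>y. F y * red y) x"
    using assms by (simp add: dbarL_scaleR)
  also have "\<dots> = - 2 *\<^sub>R qconj (F x)"
    using assms by (simp add: dbarL_mult_red_monogenic)
  finally show ?thesis .
qed

lemma dbarR_anticomm_conj_red_monogenic:
  assumes "\<And>y. qi3 (F y) = 0" "qhas_partials_on \<Omega> F" "x \<in> \<Omega>" "dbarL F x = 0"
  shows "dbarR (\<lambda>y. qconj (red y) * F y + F y * qconj (red y)) x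
    = 4 *\<^sub>R F x + of_real (2 * qre (F x)) + (\<Sum>i\<in>UNIV. qpd i F x * qconj (red x) * qbasis i)"
proof -
  have "dbarR (\<lambda>y. qconj (red y) * F y + F y * qconj (red y)) x
    = (\<Sum>i\<in>UNIV. qconj (qbasis i) * F x * qbasis i) + qconj (red x) * dbarR F x
      + ((\<Sum>i\<in>UNIV. qpd i F x * qconj (red x) * qbasis i) + F x * (\<Sum>i\<in>UNIV. qconj (qbasis i) * qbasis i))"
    using assms(2,3) by (simp add: dbarR_add dbarR_mult dbarR_eq_sum[of "\<lambda>y. qconj (red y)"])
  also have "\<dots> = 4 *\<^sub>R F x + of_real (2 * qre (F x)) + (\<Sum>i\<in>UNIV. qpd i F x * qconj (red x) * qbasis i)"
    using assms by (simp add: sum_qconj_qbasis_sandwich sum_qconj_qbasis_mult_qbasis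
        dbarR_eq_0_if_dbarL_eq_0 quat_eq_iff)
  finally show ?thesis .
qed

lemma dbarL_qpd_monogenic:
  assumes "qC2_on \<Omega> F" "x \<in> \<Omega>" "\<And>y. y \<in> \<Omega> \<Longrightarrow> dbarL F y = 0"
  shows "dbarL (qpd i F) x = 0"
proof -
  note partials = qC2_on_has_partials_on[OF assms(1)]
  have "dbarL (qpd i F) x = (\<Sum>j\<in>UNIV. qbasis j * qpd i (qpd j F) x)"
    using assms(1,2) by (simp add: dbarL_eq_sum qpd_commute)
  also have "\<dots> = qpd i (dbarL F) x"
    using assms(2) partials by (simp add: dbarL_eq_sum[abs_def])
  also have "\<dots> = qpd i (\<lambda>y. 0) x"
    using assms(2,3) by (rule qpd_cong)
  finally show ?thesis by simp
qed

lemma dbarL_anticomm_expansion_monogenic: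
  assumes "\<And>y. qi3 (F y) = 0" "qC2_on \<Omega> F" "x \<in> \<Omega>" "\<And>y. y \<in> \<Omega> \<Longrightarrow> dbarL F y = 0"
  shows "dbarL (\<lambda>y. 4 *\<^sub>R F y + of_real (2 * qre (F y)) + (\<Sum>i\<in>UNIV. qpd i F y * qconj (red y) * qbasis i)) x
    = 4 *\<^sub>R dbarL (\<lambda>y. of_real (qre (F y))) x"
proof -
  note partials = qC2_on_has_partials_on[OF assms(2)]
  have qre_partials: "has_partials_on \<Omega> (\<lambda>y. qre (F y))"
    using partials(1) by (simp add: qhas_partials_on_def)
  have "dbarL (\<lambda>y. qpd i F y * (qconj (red y) * qbasis i)) x
      = (\<Sum>j\<in>UNIV. qbasis j * qpd i F x * qconj (qbasis j)) * qbasis i" for i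
    using partials assms(3)
    by (simp add: dbarL_mult dbarL_qpd_monogenic[OF assms(2-4)] sum_distrib_right mult.assoc)
  also have "\<dots> i = (qpd i F x + of_real (2 * pd i (\<lambda>y. qre (F y)) x)) * qbasis i" for i
    using assms(1) by (simp add: sum_qbasis_sandwich_qconj)
  finally have terms: "dbarL (\<lambda>y. qpd i F y * qconj (red y) * qbasis i) x
      = qpd i F x * qbasis i + of_real (pd i (\<lambda>y. 2 * qre (F y)) x) * qbasis i" for i
    using assms(3) qre_partials by (simp add: mult.assoc distrib_right)
  have double: "dbarL (\<lambda>y. of_real (2 * qre (F y))) x = 2 *\<^sub>R dbarL (\<lambda>y. of_real (qre (F y))) x"
    using assms(3) qre_partials
    by (subst (1 2) dbarL_of_real) (simp_all add: scaleR_sum_right scaleR_conv_of_real mult.assoc sum_distrib_left)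
  have "dbarL (\<lambda>y. 4 *\<^sub>R F y + of_real (2 * qre (F y)) + (\<Sum>i\<in>UNIV. qpd i F y * qconj (red y) * qbasis i)) x
      = 4 *\<^sub>R dbarL F x + dbarL (\<lambda>y. of_real (2 * qre (F y))) x
        + (\<Sum>i\<in>UNIV. dbarL (\<lambda>y. qpd i F y * qconj (red y) * qbasis i) x)"
    using partials assms(3) qre_partials by (simp add: dbarL_add dbarL_scaleR dbarL_sum)
  also have "\<dots> = 4 *\<^sub>R dbarL F x + dbarR F x + 2 *\<^sub>R dbarL (\<lambda>y. of_real (2 * qre (F y))) x"
  proof -
    have "has_partials_on \<Omega> (\<lambda>y. 2 * qre (F y))" using qre_partials by simp
    then have "(\<Sum>i\<in>UNIV. dbarL (\<lambda>y. qpd i F y * qconj (red y) * qbasis i) x)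
        = dbarR F x + dbarL (\<lambda>y. of_real (2 * qre (F y))) x"
      using assms(3) by (simp only: terms sum.distrib dbarR_eq_sum dbarL_of_real)
    then show ?thesis by (simp add: scaleR_2 algebra_simps)
  qed
  also have "\<dots> = 4 *\<^sub>R dbarL (\<lambda>y. of_real (qre (F y))) x"
    unfolding double using assms by (simp add: dbarR_eq_0_if_dbarL_eq_0)
  finally show ?thesis .
qed

lemma dbarLR_anticomm_conj_red_monogenic:
  assumes "\<And>y. qi3 (F y) = 0" "qC2_on \<Omega> F" "x \<in> \<Omega>" "\<And>y. y \<in> \<Omega> \<Longrightarrow> dbarL F y = 0"
  shows "dbarLR (\<lambda>y. qconj (red y) * F y + F y * qconj (red y)) x
    = 4 *\<^sub>R dbarL (\<lambda>y. of_real (qre (F y))) x"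
proof -
  have "dbarLR (\<lambda>y. qconj (red y) * F y + F y * qconj (red y)) x
    = dbarL (\<lambda>y. 4 *\<^sub>R F y + of_real (2 * qre (F y)) + (\<Sum>i\<in>UNIV. qpd i F y * qconj (red y) * qbasis i)) x"
    unfolding dbarLR_def using assms qC2_on_has_partials_on[OF assms(2)]
    by (intro dbarL_cong) (simp_all add: dbarR_anticomm_conj_red_monogenic)
  also have "\<dots> = 4 *\<^sub>R dbarL (\<lambda>y. of_real (qre (F y))) x"
    using assms by (rule dbarL_anticomm_expansion_monogenic)
  finally show ?thesis .
qed

end

end

theorem lemma4p3:
  fixes \<Omega> :: "(real^3) set" and f :: "real^3 \<Rightarrow> real^3"
  assumes "open \<Omega>" and "connected \<Omega>" and "\<Omega> \<noteq> {}"
    and "\<And>k. C2_on \<Omega> (\<lambda>y. f y $ k)"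
    and "\<And>x. x \<in> \<Omega> \<Longrightarrow> dbarL (\<lambda>y. red (f y)) x = qzero"
  shows "\<forall>x\<in>\<Omega>.
      dbarLR (\<lambda>y. qconj (red y) \<otimes>\<^sub>q red (f y) \<oplus>\<^sub>q red (f y) \<otimes>\<^sub>q qconj (red y)) x
        = qscale 4 (dbarL (\<lambda>y. rquat (f y $ 1)) x)
    \<and> dbarLR (\<lambda>y. qscale ((norm y)\<^sup>2) (red (f y))) x
        = qscale (-2) (qconj (red (f x)))"
proof -
  let ?F = "\<lambda>y. red (f y)"
  have reduced: "\<And>y. qi3 (?F y) = 0" by simp
  have C2: "qC2_on \<Omega> ?F" using assms(4) by (simp add: qC2_on_def C2_on_const)
  have monogenic: "\<And>y. y \<in> \<Omega> \<Longrightarrow> dbarL ?F y = 0" using assms(5) by (simp add: quat_operations)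
  show ?thesis
    unfolding quat_operations
    using dbarLR_anticomm_conj_red_monogenic[OF assms(1) reduced C2 _ monogenic]
      dbarLR_norm_sq_scaleR_monogenic[OF assms(1) reduced qC2_on_has_partials_on(1)[OF C2] _ monogenic]
    by simp
qed

end
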